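(* Let $B$ be a log-product expression of degree $n$ and let $\gamma \geq 1$. Then there exist an integer $m \geq \log (1+n /\gamma)$ and $2m$ homogeneous expressions $P_1, \dots, P_{m} , S_1, \dots, S_{m}$ (possibly equal to $\epsilon$) such that $B \equiv P_1 P_2 \cdots P_{m} S_{m} S_{m-1} \cdots S_1$, $\deg P_i + \deg S_i \geq \gamma$ for all $i \in \{1,\dots,m-1\}$, and $\deg P_{m} +\deg S_{m} \leq \gamma$.
   Context: Regular expressions (without star, without $\emptyset$) are built from $\epsilon$ and letters by union and concatenation; $R\equiv R'$ means they describe the same language. A homogeneous expression describes a language all of whose words have the same length, its degree $\deg R$. A homogeneous expression $B$ is log-product if it is a letter, or there are homogeneous expressions $B_1,B_2$ with $B_1$ log-product, $\deg B_1\ge\deg B_2$ and $B=B_1B_2$ or $B=B_2B_1$. Logarithms are base 2. *)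

theory Defs
  imports Complex_Main
begin

datatype 'a rexp = Eps | Letter 'a | Union "'a rexp" "'a rexp" | Concat "'a rexp" "'a rexp"

fun lang :: "'a rexp \<Rightarrow> 'a list set" where
  "lang Eps = {[]}"
| "lang (Letter a) = {[a]}"
| "lang (Union r s) = lang r \<union> lang s"
| "lang (Concat r s) = {u @ v | u v. u \<in> lang r \<and> v \<in> lang s}"

definition equiv_rexp :: "'a rexp \<Rightarrow> 'a rexp \<Rightarrow> bool" (infix "\<equiv>\<^sub>r" 50) where
  "r \<equiv>\<^sub>r s \<longleftrightarrow> lang r = lang s"

definition homogeneous :: "'a rexp \<Rightarrow> bool" where
  "homogeneous r \<longleftrightarrow> (\<exists>k. \<forall>w\<in>lang r. length w = k)"

text \<open>Degree: the common length of all words (languages are never empty here).\<close>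
definition deg :: "'a rexp \<Rightarrow> nat" where
  "deg r = (THE k. \<forall>w\<in>lang r. length w = k)"

inductive log_product :: "'a rexp \<Rightarrow> bool" where
  letter: "log_product (Letter a)"
| left: "\<lbrakk>log_product B1; homogeneous B1; homogeneous B2; deg B1 \<ge> deg B2\<rbrakk>
          \<Longrightarrow> log_product (Concat B1 B2)"
| right: "\<lbrakk>log_product B1; homogeneous B1; homogeneous B2; deg B1 \<ge> deg B2\<rbrakk>
          \<Longrightarrow> log_product (Concat B2 B1)"

definition prod_rexp :: "'a rexp list \<Rightarrow> 'a rexp" where
  "prod_rexp rs = foldr Concat rs Eps"

end

theory Submission
  imports Defs
begin

text \<open>
  Write \<open>B\<close> in a context \<open>U B V\<close> with \<open>deg U + deg V < \<gamma>\<close> and induct on the log-product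
  structure.  If \<open>B = B\<^sub>1 B\<^sub>2\<close> (or \<open>B\<^sub>2 B\<^sub>1\<close>) with \<open>deg B\<^sub>2 \<le> deg B\<^sub>1\<close>, absorb \<open>B\<^sub>2\<close> into the
  context.  As long as the context stays below \<open>\<gamma>\<close> we simply recurse on \<open>B\<^sub>1\<close>; otherwise the
  context becomes the outermost layer \<open>(P\<^sub>1, S\<^sub>1)\<close> and \<open>B\<^sub>1\<close> is decomposed on its own.  In the
  second case one layer is spent while the degree at most doubles, since the discarded
  context weighs less than \<open>\<gamma> + deg B\<^sub>2 \<le> \<gamma> + deg B\<^sub>1\<close>.  This keeps the invariant
  \<open>deg (U B V) + \<gamma> \<le> 2\<^sup>m \<gamma>\<close> for a decomposition into \<open>m\<close> layers.
\<close>

definition conc :: "'a list set \<Rightarrow> 'a list set \<Rightarrow> 'a list set" where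
  "conc A B = {u @ v | u v. u \<in> A \<and> v \<in> B}"

lemma lang_Concat_conc [simp]: "lang (Concat r s) = conc (lang r) (lang s)"
  by (simp add: conc_def)

declare lang.simps(4) [simp del]

lemma conc_assoc [simp]: "conc (conc A B) C = conc A (conc B C)"
  unfolding conc_def by (auto, metis append.assoc, metis append.assoc)

lemma conc_Nil_left [simp]: "conc {[]} A = A"
  and conc_Nil_right [simp]: "conc A {[]} = A"
  unfolding conc_def by auto

lemma prod_rexp_Nil [simp]: "prod_rexp [] = Eps"
  and prod_rexp_Cons [simp]: "prod_rexp (r # rs) = Concat r (prod_rexp rs)"
  by (simp_all add: prod_rexp_def)

lemma lang_prod_rexp_append [simp]:
  "lang (prod_rexp (rs @ ss)) = conc (lang (prod_rexp rs)) (lang (prod_rexp ss))"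
  by (induction rs) auto

lemma lang_nonempty: "lang r \<noteq> {}"
proof (induction r)
  case (Concat r s)
  then obtain u v where "u \<in> lang r" "v \<in> lang s" by blast
  then show ?case by (auto simp: conc_def)
qed auto

lemma deg_eq_length:
  assumes "homogeneous r" "w \<in> lang r"
  shows "deg r = length w"
proof -
  obtain k where k: "\<forall>w\<in>lang r. length w = k"
    using assms(1) homogeneous_def by blast
  with assms(2) have "(THE k. \<forall>w\<in>lang r. length w = k) = k"
    by (intro the_equality) auto
  with k assms(2) show ?thesis
    by (simp add: deg_def)
qed

lemma deg_cong: "lang r = lang s \<Longrightarrow> deg r = deg s"
  by (simp add: deg_def)

lemma homogeneous_Concat:
  assumes "homogeneous r" "homogeneous s"
  shows "homogeneous (Concat r s)"
  unfolding homogeneous_def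
proof
  show "\<forall>w\<in>lang (Concat r s). length w = deg r + deg s"
    using assms by (auto simp: conc_def deg_eq_length)
qed

lemma deg_Concat:
  assumes "homogeneous r" "homogeneous s"
  shows "deg (Concat r s) = deg r + deg s"
proof -
  obtain u v where "u \<in> lang r" "v \<in> lang s"
    using lang_nonempty by blast
  moreover from this have "u @ v \<in> lang (Concat r s)"
    by (auto simp: conc_def)
  ultimately show ?thesis
    using assms deg_eq_length[OF homogeneous_Concat[OF assms]]
    by (simp add: deg_eq_length)
qed

lemma homogeneous_Eps [simp]: "homogeneous Eps"
  and deg_Eps [simp]: "deg Eps = 0"
  using deg_eq_length[of Eps "[]"] by (auto simp: homogeneous_def)

lemma homogeneous_Letter [simp]: "homogeneous (Letter a)"
  and deg_Letter [simp]: "deg (Letter a) = 1"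
  using deg_eq_length[of "Letter a" "[a]"] by (auto simp: homogeneous_def)

lemma map_nth_shift: "map (\<lambda>i. f (xs ! (i - 1))) [1..<length xs + 1] = map f xs"
proof -
  have "[1..<length xs + 1] = map Suc [0..<length xs]"
    by (simp add: map_Suc_upt)
  then show ?thesis
    by (auto intro: nth_equalityI)
qed

definition nested_prod :: "('a rexp \<times> 'a rexp) list \<Rightarrow> 'a rexp" where
  "nested_prod ps = prod_rexp (map fst ps @ rev (map snd ps))"

lemma lang_nested_prod_Cons:
  "lang (nested_prod ((P, S) # ps)) = lang (Concat P (Concat (nested_prod ps) S))"
  by (simp add: nested_prod_def)

definition layering :: "real \<Rightarrow> 'a rexp \<Rightarrow> ('a rexp \<times> 'a rexp) list \<Rightarrow> bool" where
  "layering \<gamma> W ps \<longleftrightarrow> ps \<noteq> []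
     \<and> (\<forall>(P, S)\<in>set ps. homogeneous P \<and> homogeneous S)
     \<and> lang W = lang (nested_prod ps)
     \<and> (\<forall>(P, S)\<in>set (butlast ps). \<gamma> \<le> real (deg P + deg S))
     \<and> real (deg (fst (last ps)) + deg (snd (last ps))) \<le> \<gamma>"

lemma layering_cong: "lang W = lang W' \<Longrightarrow> layering \<gamma> W ps \<Longrightarrow> layering \<gamma> W' ps"
  by (simp add: layering_def)

lemma layering_single:
  assumes "homogeneous P" "homogeneous S" "real (deg P + deg S) \<le> \<gamma>"
  shows "layering \<gamma> (Concat P S) [(P, S)]"
  using assms by (simp add: layering_def nested_prod_def)

lemma layering_Eps: "0 \<le> \<gamma> \<Longrightarrow> layering \<gamma> Eps [(Eps, Eps)]"
  using layering_single[of Eps Eps \<gamma>] by (simp add: layering_def)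

lemma layering_Cons:
  assumes "layering \<gamma> W ps" "homogeneous P" "homogeneous S" "\<gamma> \<le> real (deg P + deg S)"
  shows "layering \<gamma> (Concat P (Concat W S)) ((P, S) # ps)"
  using assms by (simp add: layering_def lang_nested_prod_Cons)

lemma layering_nth:
  assumes "layering \<gamma> W ps"
  defines "m \<equiv> length ps" and "P \<equiv> \<lambda>i. fst (ps ! (i - 1))" and "S \<equiv> \<lambda>i. snd (ps ! (i - 1))"
  shows "(\<forall>i\<in>{1..m}. homogeneous (P i) \<and> homogeneous (S i))
    \<and> W \<equiv>\<^sub>r prod_rexp (map P [1..<m+1] @ map S (rev [1..<m+1]))
    \<and> (\<forall>i\<in>{1..<m}. real (deg (P i) + deg (S i)) \<ge> \<gamma>)
    \<and> real (deg (P m) + deg (S m)) \<le> \<gamma>"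
proof -
  from assms(1) have nonempty: "ps \<noteq> []"
    and homogeneous: "\<forall>(P, S)\<in>set ps. homogeneous P \<and> homogeneous S"
    and lang_W: "lang W = lang (nested_prod ps)"
    and outer: "\<forall>(P, S)\<in>set (butlast ps). \<gamma> \<le> real (deg P + deg S)"
    and innermost: "real (deg (fst (last ps)) + deg (snd (last ps))) \<le> \<gamma>"
    by (auto simp: layering_def)
  have "map P [1..<m+1] @ map S (rev [1..<m+1]) = map fst ps @ rev (map snd ps)"
    unfolding rev_map[symmetric] m_def P_def S_def map_nth_shift by (rule refl)
  with lang_W have "W \<equiv>\<^sub>r prod_rexp (map P [1..<m+1] @ map S (rev [1..<m+1]))"
    by (simp add: equiv_rexp_def nested_prod_def)
  moreover have "\<forall>i\<in>{1..m}. homogeneous (P i) \<and> homogeneous (S i)"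
  proof
    fix i assume "i \<in> {1..m}"
    then have "ps ! (i - 1) \<in> set ps"
      by (auto simp: m_def intro!: nth_mem)
    with homogeneous show "homogeneous (P i) \<and> homogeneous (S i)"
      unfolding P_def S_def case_prod_beta by blast
  qed
  moreover have "\<forall>i\<in>{1..<m}. real (deg (P i) + deg (S i)) \<ge> \<gamma>"
  proof
    fix i assume "i \<in> {1..<m}"
    then have "ps ! (i - 1) \<in> set (butlast ps)"
      using nth_mem[of "i - 1" "butlast ps"] by (simp add: m_def nth_butlast, linarith)
    with outer show "real (deg (P i) + deg (S i)) \<ge> \<gamma>"
      unfolding P_def S_def case_prod_beta by blast
  qed
  moreover have "real (deg (P m) + deg (S m)) \<le> \<gamma>"
    using nonempty innermost by (simp add: m_def P_def S_def last_conv_nth)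
  ultimately show ?thesis
    by blast
qed

definition has_long_layering :: "real \<Rightarrow> 'a rexp \<Rightarrow> bool" where
  "has_long_layering \<gamma> W \<longleftrightarrow>
     (\<exists>ps. layering \<gamma> W ps \<and> real (deg W) + \<gamma> \<le> 2 ^ length ps * \<gamma>)"

lemma has_long_layeringI:
  "layering \<gamma> W ps \<Longrightarrow> real (deg W) + \<gamma> \<le> 2 ^ length ps * \<gamma> \<Longrightarrow> has_long_layering \<gamma> W"
  unfolding has_long_layering_def by blast

lemma has_long_layering_cong:
  "lang W = lang W' \<Longrightarrow> has_long_layering \<gamma> W \<Longrightarrow> has_long_layering \<gamma> W'"
  unfolding has_long_layering_def using layering_cong deg_cong by metis

lemma has_long_layering_Letter_in_context:
  assumes "homogeneous U" "homogeneous V" "real (deg U + deg V) < \<gamma>" "1 \<le> \<gamma>"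
  shows "has_long_layering \<gamma> (Concat U (Concat (Letter a) V))"
proof -
  let ?P = "Concat U (Letter a)"
  have P: "homogeneous ?P" "deg ?P = deg U + 1"
    using assms(1) by (simp_all add: homogeneous_Concat deg_Concat)
  have "has_long_layering \<gamma> (Concat ?P (Concat Eps V))"
  proof (cases "real (deg ?P + deg V) \<le> \<gamma>")
    case True
    then have "layering \<gamma> (Concat ?P (Concat Eps V)) [(?P, V)]"
      by (intro layering_cong[OF _ layering_single[OF P(1) assms(2)]]) simp_all
    then show ?thesis
      by (rule has_long_layeringI)
        (use True P assms(2) in \<open>simp add: homogeneous_Concat deg_Concat\<close>)
  next
    case False
    then have "layering \<gamma> (Concat ?P (Concat Eps V)) [(?P, V), (Eps, Eps)]"
      using layering_Cons[OF layering_Eps P(1) assms(2)] assms(4) by simp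
    then show ?thesis
      by (rule has_long_layeringI)
        (use P assms in \<open>simp add: homogeneous_Concat deg_Concat\<close>)
  qed
  then show ?thesis
    by (rule has_long_layering_cong[rotated]) simp
qed

lemma has_long_layering_wider_context:
  assumes IH: "\<And>U V. homogeneous U \<Longrightarrow> homogeneous V \<Longrightarrow> real (deg U + deg V) < \<gamma> \<Longrightarrow>
      has_long_layering \<gamma> (Concat U (Concat B V))"
    and "homogeneous B" "homogeneous U" "homogeneous V"
    and "real (deg U + deg V) < \<gamma> + deg B" "0 < \<gamma>"
  shows "has_long_layering \<gamma> (Concat U (Concat B V))"
proof (cases "real (deg U + deg V) < \<gamma>")
  case True
  with IH assms(3,4) show ?thesis by blast
next
  case False
  have "has_long_layering \<gamma> B"
    using assms(6) by (intro has_long_layering_cong[OF _ IH[of Eps Eps]]) simp_all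
  then obtain ps where ps: "layering \<gamma> B ps" "real (deg B) + \<gamma> \<le> 2 ^ length ps * \<gamma>"
    unfolding has_long_layering_def by blast
  have "layering \<gamma> (Concat U (Concat B V)) ((U, V) # ps)"
    using layering_Cons[OF ps(1) assms(3,4)] False by simp
  moreover have "real (deg (Concat U (Concat B V))) + \<gamma> \<le> 2 ^ length ((U, V) # ps) * \<gamma>"
    using ps(2) assms(2-5) by (simp add: homogeneous_Concat deg_Concat)
  ultimately show ?thesis
    by (rule has_long_layeringI)
qed

lemma log_product_has_long_layering_in_context:
  assumes "log_product B" "1 \<le> \<gamma>"
    and "homogeneous U" "homogeneous V" "real (deg U + deg V) < \<gamma>"
  shows "has_long_layering \<gamma> (Concat U (Concat B V))"
  using assms(1,3-5)
proof (induction arbitrary: U V rule: log_product.induct)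
  case (letter a)
  then show ?case
    using assms(2) by (rule has_long_layering_Letter_in_context)
next
  case (left B1 B2)
  have "has_long_layering \<gamma> (Concat U (Concat B1 (Concat B2 V)))"
    using left.hyps(2-4) left.prems assms(2)
    by (intro has_long_layering_wider_context[OF left.IH])
      (simp_all add: homogeneous_Concat deg_Concat)
  then show ?case
    by (rule has_long_layering_cong[rotated]) simp
next
  case (right B1 B2)
  have "has_long_layering \<gamma> (Concat (Concat U B2) (Concat B1 V))"
    using right.hyps(2-4) right.prems assms(2)
    by (intro has_long_layering_wider_context[OF right.IH])
      (simp_all add: homogeneous_Concat deg_Concat)
  then show ?case
    by (rule has_long_layering_cong[rotated]) simp
qed

theorem proposition6p7:
  fixes B :: "'a rexp" and n :: nat and \<gamma> :: real
  assumes "log_product B" and "deg B = n" and "\<gamma> \<ge> 1"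
  shows "\<exists>(m::nat) (P::nat \<Rightarrow> 'a rexp) (S::nat \<Rightarrow> 'a rexp).
           real m \<ge> log 2 (1 + real n / \<gamma>)
         \<and> (\<forall>i\<in>{1..m}. homogeneous (P i) \<and> homogeneous (S i))
         \<and> B \<equiv>\<^sub>r prod_rexp (map P [1..<m+1] @ map S (rev [1..<m+1]))
         \<and> (\<forall>i\<in>{1..<m}. real (deg (P i) + deg (S i)) \<ge> \<gamma>)
         \<and> real (deg (P m) + deg (S m)) \<le> \<gamma>"
proof -
  have "has_long_layering \<gamma> B"
    using assms(3) by (intro has_long_layering_cong[OF _
        log_product_has_long_layering_in_context[OF assms(1,3), of Eps Eps]]) simp_all
  then obtain ps where ps: "layering \<gamma> B ps" "real n + \<gamma> \<le> 2 ^ length ps * \<gamma>"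
    using assms(2) unfolding has_long_layering_def by blast
  from ps(2) assms(3) have "1 + real n / \<gamma> \<le> 2 powr length ps"
    by (simp add: field_simps powr_realpow)
  then have "log 2 (1 + real n / \<gamma>) \<le> real (length ps)"
    using assms(3) by (subst log_le_iff) (auto intro: add_pos_nonneg)
  with layering_nth[OF ps(1)] show ?thesis
    by (intro exI[of _ "length ps"] exI[of _ "\<lambda>i. fst (ps ! (i - 1))"]
        exI[of _ "\<lambda>i. snd (ps ! (i - 1))"]) simp
qed

end
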